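(* Let $p\ge 30$ be a prime such that $-1$ is a quadratic residue modulo $p$ and $2$ and $3$ are quadratic non-residues modulo $p$. Then the path system $\mathcal{P}_p$ on the Paley graph $G_p$ is irreducible.
   Context: Let $R$ and $N$ denote the sets of nonzero quadratic residues and quadratic non-residues in $\mathbb{F}_p$. The Paley graph $G_p$ has vertex set $\mathbb{F}_p$, with $a,b$ adjacent iff $a-b\in R$. A path system $\mathcal{P}$ in a graph $G=(V,E)$ is a collection of simple paths such that for every pair of distinct vertices $u,v$ there is exactly one path $P_{u,v}\in\mathcal{P}$ connecting them. A partition $V=A\sqcup B$ with $A,B\neq\emptyset$ is a reduction of $\mathcal{P}$ if for all $u,v\in A$ all vertices of $P_{u,v}$ lie in $A$, and for all $u,v\in B$ all vertices of $P_{u,v}$ lie in $B$; $\mathcal{P}$ is irreducible if it has no reduction. The path system $\mathcal{P}_p$ is defined for $a\neq b\in\mathbb{F}_p$ by: if $b-a\in R$, then $P_{a,b}=(a,b)$; if $b-a=3$, then $P_{a,b}=(a,a+1,a+2,b)$ (and $P_{b,a}$ is the same path); if $b-a\in N$ and $b-a\neq\pm3$, then $P_{a,b}=(a,\tfrac{a+b}{2},b)$. *)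

theory Defs
  imports "HOL-Number_Theory.Number_Theory"
begin

text \<open>F_p is modelled by the integers {0..<p}, arithmetic taken mod p.\<close>

definition Fp :: "int \<Rightarrow> int set" where
  "Fp p = {0..<p}"

definition QR :: "int \<Rightarrow> int \<Rightarrow> bool" where
  "QR p x \<longleftrightarrow> x mod p \<noteq> 0 \<and> QuadRes p x"

definition QNR :: "int \<Rightarrow> int \<Rightarrow> bool" where
  "QNR p x \<longleftrightarrow> x mod p \<noteq> 0 \<and> \<not> QuadRes p x"

definition paley_adj :: "int \<Rightarrow> int \<Rightarrow> int \<Rightarrow> bool" where
  "paley_adj p a b \<longleftrightarrow> QR p (a - b)"

definition half_sum :: "int \<Rightarrow> int \<Rightarrow> int \<Rightarrow> int" where
  "half_sum p a b = (THE c. c \<in> Fp p \<and> [2 * c = a + b] (mod p))"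

definition paley_path :: "int \<Rightarrow> int \<Rightarrow> int \<Rightarrow> int list" where
  "paley_path p a b =
     (if QR p (b - a) then [a, b]
      else if [b - a = 3] (mod p) then [a, (a + 1) mod p, (a + 2) mod p, b]
      else if [a - b = 3] (mod p) then rev [b, (b + 1) mod p, (b + 2) mod p, a]
      else [a, half_sum p a b, b])"

definition is_reduction :: "'v set \<Rightarrow> ('v \<Rightarrow> 'v \<Rightarrow> 'v list) \<Rightarrow> 'v set \<Rightarrow> 'v set \<Rightarrow> bool" where
  "is_reduction V P A B \<longleftrightarrow>
     A \<union> B = V \<and> A \<inter> B = {} \<and> A \<noteq> {} \<and> B \<noteq> {} \<and>
     (\<forall>u\<in>A. \<forall>v\<in>A. u \<noteq> v \<longrightarrow> set (P u v) \<subseteq> A) \<and>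
     (\<forall>u\<in>B. \<forall>v\<in>B. u \<noteq> v \<longrightarrow> set (P u v) \<subseteq> B)"

definition irreducible_path_system :: "'v set \<Rightarrow> ('v \<Rightarrow> 'v \<Rightarrow> 'v list) \<Rightarrow> bool" where
  "irreducible_path_system V P \<longleftrightarrow> \<not> (\<exists>A B. is_reduction V P A B)"

end

theory Submission
  imports Defs "HOL-Library.Discrete_Functions"
begin

text \<open>
  Colour each x \<in> \<int> by the side of the reduction containing x mod p.  As 2 and 3 are
  non-residues, so is 2d whenever d is a square or six times a square; for such d with
  2d + 3 < p the path from x - d to x + d is the midpoint path through x, and the path from
  x to x + 3 passes through x + 1 and x + 2.  So equally coloured pairs at these distances
  force the colour of the points between them.  If x and x + 1 had different colours, these
  rules would spread the two colours over adjacent intervals [x - a, x] and [x + 1, x + b]: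
  the shorter one can always grow by one, because every interval [(s + 2)/2, s - 1] with
  s \<ge> 5 contains a square or six times a square.  At a + b = p the two intervals meet
  modulo p, a contradiction.  Hence the colouring is constant and one side is empty.
\<close>

lemma QuadRes_cong: "[x = y] (mod p) \<Longrightarrow> QuadRes p x \<longleftrightarrow> QuadRes p y"
  unfolding QuadRes_def by (meson cong_sym cong_trans)

lemma not_QuadRes_mult_square:
  fixes p c k :: int
  assumes "prime p" "\<not> QuadRes p c" "\<not> p dvd k"
  shows "\<not> QuadRes p (c * k^2)"
proof
  assume "QuadRes p (c * k^2)"
  then obtain y where y: "[y^2 = c * k^2] (mod p)" by (auto simp: QuadRes_def)
  have "coprime k p" using assms(1,3) prime_imp_coprime coprime_commute by blast
  then obtain k' where k': "[k * k' = 1] (mod p)" using cong_solve_coprime_int by blast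
  have "[(y * k')^2 = c * (k * k')^2] (mod p)"
    using cong_mult[OF y cong_refl[of "k'^2"]] by (simp add: power_mult_distrib ac_simps)
  also have "[c * (k * k')^2 = c] (mod p)"
    using cong_mult[OF cong_refl[of c] cong_pow[OF k', of 2]] by simp
  finally have "QuadRes p c" unfolding QuadRes_def by blast
  with assms(2) show False ..
qed

lemma not_QuadRes_double_step:
  fixes p k d :: int
  assumes "prime p" "\<not> QuadRes p 2" "\<not> QuadRes p 3"
    and "0 < k" "d = k^2 \<or> d = 6 * k^2" "2 * d < p"
  shows "\<not> QuadRes p (2 * d)"
  using assms(5)
proof
  assume d: "d = k^2"
  have "k \<le> k^2" using assms(4) by (simp add: power2_eq_square)
  then have "\<not> p dvd k" using assms(4,6) d zdvd_imp_le by fastforce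
  then show ?thesis using not_QuadRes_mult_square[OF assms(1,2)] d by simp
next
  assume d: "d = 6 * k^2"
  have "2 * k \<le> (2 * k)^2" using assms(4) by (simp add: power2_eq_square)
  then have "\<not> p dvd 2 * k" using assms(4,6) d zdvd_imp_le by fastforce
  moreover have "2 * d = 3 * (2 * k)^2" using d by (simp add: power_mult_distrib)
  ultimately show ?thesis using not_QuadRes_mult_square[OF assms(1,3), of "2 * k"] by metis
qed

lemma half_sum_eq:
  fixes p a b c :: int
  assumes "prime p" "p > 2" "c \<in> Fp p" "[2 * c = a + b] (mod p)"
  shows "half_sum p a b = c"
  unfolding half_sum_def
proof (rule the_equality)
  show "c \<in> Fp p \<and> [2 * c = a + b] (mod p)" using assms(3,4) ..
next
  fix c' assume c': "c' \<in> Fp p \<and> [2 * c' = a + b] (mod p)"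
  have "\<not> p dvd 2" using assms(2) zdvd_imp_le by fastforce
  then have "coprime 2 p" using assms(1) prime_imp_coprime coprime_commute by blast
  moreover have "[2 * c' = 2 * c] (mod p)" using c' assms(4) cong_sym cong_trans by blast
  ultimately have "[c' = c] (mod p)" using cong_mult_lcancel by blast
  then show "c' = c" using c' assms(3) cong_less_imp_eq_int by (auto simp: Fp_def)
qed

lemma mod_neq_of_dist:
  fixes p x y :: int
  assumes "0 < y - x" "y - x < p"
  shows "x mod p \<noteq> y mod p"
proof
  assume "x mod p = y mod p"
  then have "p dvd y - x" by (simp add: mod_eq_dvd_iff dvd_diff_commute)
  then show False using assms zdvd_imp_le by fastforce
qed

lemma paley_path_midpoint:
  fixes p d m :: int
  assumes "prime p" "\<not> QuadRes p (2 * d)" "0 < d" "2 * d + 3 < p"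
  shows "paley_path p ((m - d) mod p) ((m + d) mod p) = [(m - d) mod p, m mod p, (m + d) mod p]"
proof -
  define v w where "v = (m - d) mod p" and "w = (m + d) mod p"
  have diff: "[w - v = 2 * d] (mod p)" unfolding v_def w_def cong_def mod_diff_eq by simp
  then have "\<not> QR p (w - v)" using QuadRes_cong assms(2) unfolding QR_def by blast
  moreover have "\<not> [w - v = 3] (mod p)"
  proof
    assume "[w - v = 3] (mod p)"
    then have "[2 * d = 3] (mod p)" using diff cong_sym cong_trans by blast
    then have "2 * d = 3" using assms(3,4) by (intro cong_less_imp_eq_int) auto
    then show False by presburger
  qed
  moreover have "\<not> [v - w = 3] (mod p)"
  proof
    assume "[v - w = 3] (mod p)"
    then have "[(w - v) + 3 = 0] (mod p)"
      using dvd_minus_iff[of p "v - w - 3"] by (simp add: cong_iff_dvd_diff algebra_simps)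
    then have "[2 * d + 3 = 0] (mod p)" using cong_add[OF diff cong_refl] cong_sym cong_trans by blast
    then have "2 * d + 3 = 0" using assms(3,4) by (intro cong_less_imp_eq_int) auto
    then show False using assms(3) by simp
  qed
  moreover have "half_sum p v w = m mod p"
  proof (rule half_sum_eq)
    show "m mod p \<in> Fp p" using assms(3,4) by (simp add: Fp_def)
    show "[2 * (m mod p) = v + w] (mod p)"
      unfolding v_def w_def cong_def mod_add_eq mod_mult_right_eq by (simp add: algebra_simps)
  qed (use assms in \<open>simp_all add: prime_gt_1_int\<close>)
  ultimately show ?thesis unfolding paley_path_def v_def w_def by simp
qed

lemma paley_path_three:
  fixes p x :: int
  assumes "\<not> QuadRes p 3"
  shows "paley_path p (x mod p) ((x + 3) mod p)
    = [x mod p, (x + 1) mod p, (x + 2) mod p, (x + 3) mod p]"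
proof -
  have "[(x + 3) mod p - x mod p = 3] (mod p)" unfolding cong_def by (simp add: mod_diff_eq)
  moreover from this have "\<not> QR p ((x + 3) mod p - x mod p)"
    using QuadRes_cong assms unfolding QR_def by blast
  ultimately show ?thesis unfolding paley_path_def by (simp add: mod_simps)
qed

lemma reduction_path_side:
  assumes "is_reduction V P A B" "u \<in> V" "v \<in> V" "u \<noteq> v" "u \<in> B \<longleftrightarrow> v \<in> B"
    and "x \<in> set (P u v)"
  shows "x \<in> B \<longleftrightarrow> u \<in> B"
  using assms unfolding is_reduction_def by blast

lemma square_between:
  fixes s :: int
  assumes "s \<ge> 10"
  shows "\<exists>k>0. s + 2 \<le> 2 * k^2 \<and> k^2 + 1 \<le> s"
proof -
  define n where "n = nat (s - 1)"
  define k where "k = int (floor_sqrt n)"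
  have n: "int n = s - 1" using assms unfolding n_def by simp
  have "int ((floor_sqrt n)^2) \<le> int n" by (simp only: of_nat_le_iff floor_sqrt_power2_le)
  then have below: "k^2 \<le> s - 1" unfolding k_def n by simp
  have "int n < int ((Suc (floor_sqrt n))^2)" by (simp only: of_nat_less_iff Suc_floor_sqrt_power2_gt)
  then have above: "s - 1 < (k + 1)^2" unfolding k_def n by (simp add: add.commute)
  have "3 \<le> k"
    using le_floor_sqrtI[of 3 n] assms unfolding k_def n_def by simp
  then have "3 * k \<le> k^2" by (simp add: power2_eq_square)
  moreover have "(k + 1)^2 = k^2 + 2 * k + 1" by (simp add: power2_eq_square algebra_simps)
  ultimately show ?thesis using below above \<open>3 \<le> k\<close> by (intro exI[of _ k]) linarith
qed

lemma square_or_six_square_between: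
  fixes s :: int
  assumes "s \<ge> 5"
  shows "\<exists>k d. 0 < k \<and> (d = k^2 \<or> d = 6 * k^2) \<and> s + 2 \<le> 2 * d \<and> d + 1 \<le> s"
proof -
  consider "s \<le> 6" | "7 \<le> s \<and> s \<le> 9" | "10 \<le> s" by linarith
  then show ?thesis
  proof cases
    case 1
    then show ?thesis using assms by (intro exI[of _ 2] exI[of _ 4]) auto
  next
    case 2
    then show ?thesis by (intro exI[of _ 1] exI[of _ 6]) auto
  next
    case 3
    then show ?thesis using square_between by blast
  qed
qed

locale midpoint_closed_colouring =
  fixes p :: int and P :: "int \<Rightarrow> bool"
  assumes periodic: "P (x + p) = P x"
    and midpoint: "0 < k \<Longrightarrow> d = k^2 \<or> d = 6 * k^2 \<Longrightarrow> 2 * d + 3 < p \<Longrightarrow>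
      P (m - d) = P (m + d) \<Longrightarrow> P m = P (m + d)"
    and three_step: "P x = P (x + 3) \<Longrightarrow> P (x + 1) = P x \<and> P (x + 2) = P x"
    and modulus_large: "12 \<le> p"
begin

lemma midpoint_left:
  "0 < k \<Longrightarrow> d = k^2 \<or> d = 6 * k^2 \<Longrightarrow> 2 * d + 3 < p \<Longrightarrow> \<not> P m \<Longrightarrow> P (m + d) \<Longrightarrow> \<not> P (m - d)"
  using midpoint by blast

lemma midpoint_right:
  "0 < k \<Longrightarrow> d = k^2 \<or> d = 6 * k^2 \<Longrightarrow> 2 * d + 3 < p \<Longrightarrow> P m \<Longrightarrow> \<not> P (m - d) \<Longrightarrow> P (m + d)"
  using midpoint by blast

definition separated :: "int \<Rightarrow> int \<Rightarrow> bool" where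
  "separated a b \<longleftrightarrow> (\<forall>x. -a \<le> x \<and> x \<le> 0 \<longrightarrow> \<not> P x) \<and> (\<forall>x. 1 \<le> x \<and> x \<le> b \<longrightarrow> P x)"

lemma separated_base:
  assumes "\<not> P 0" "P 1"
  shows "separated 5 6"
proof -
  have m1: "\<not> P (-1)" using midpoint_left[of 1 1 0] assms modulus_large by simp
  have p2: "P 2" using midpoint_right[of 1 1 1] assms modulus_large by simp
  have p3: "P 3" using three_step[of 0] assms by auto
  have m2: "\<not> P (-2)" using three_step[of "-2"] assms m1 by auto
  have m5: "\<not> P (-5)" using midpoint_left[of 2 4 "-1"] m1 p3 modulus_large by simp
  have p6: "P 6" using midpoint_right[of 2 4 2] p2 m2 modulus_large by simp
  have m34: "\<not> P (-4)" "\<not> P (-3)" using three_step[of "-5"] m5 m2 by simp_all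
  have p45: "P 4" "P 5" using three_step[of 3] p3 p6 by simp_all
  have "\<not> P x" if "-5 \<le> x" "x \<le> 0" for x
  proof -
    have "x \<in> {-5, -4, -3, -2, -1, 0}" using that by auto
    then show ?thesis using m5 m34 m2 m1 assms(1) by auto
  qed
  moreover have "P x" if "1 \<le> x" "x \<le> 6" for x
  proof -
    have "x \<in> {1, 2, 3, 4, 5, 6}" using that by auto
    then show ?thesis using assms(2) p2 p3 p45 p6 by auto
  qed
  ultimately show ?thesis unfolding separated_def by auto
qed

lemma separated_extend_left:
  assumes sep: "separated a b" and "5 \<le> a" "a < b" "a + b < p"
  shows "separated (a + 1) b"
proof -
  obtain k d where kd: "0 < k" "d = k^2 \<or> d = 6 * k^2" and d: "a + 2 \<le> 2 * d" "d + 1 \<le> a"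
    using square_or_six_square_between[of a] assms(2) by blast
  define m where "m = d - (a + 1)"
  have "\<not> P m" "P (m + d)" using sep d assms(3) unfolding separated_def m_def by auto
  then have "\<not> P (m - d)" using midpoint_left[OF kd] d assms(3,4) by simp
  then have "\<not> P (-(a + 1))" by (simp add: m_def)
  moreover have "x = -(a + 1) \<or> -a \<le> x" if "-(a + 1) \<le> x" for x using that by linarith
  ultimately show ?thesis using sep unfolding separated_def by blast
qed

lemma separated_extend_right:
  assumes sep: "separated a b" and "6 \<le> b" "b \<le> a" "a + b < p"
  shows "separated a (b + 1)"
proof -
  obtain k d where kd: "0 < k" "d = k^2 \<or> d = 6 * k^2" and d: "b - 1 + 2 \<le> 2 * d" "d + 1 \<le> b - 1"
    using square_or_six_square_between[of "b - 1"] assms(2) by auto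
  define m where "m = b + 1 - d"
  have "P m" "\<not> P (m - d)" using sep d assms(3) unfolding separated_def m_def by auto
  then have "P (m + d)" using midpoint_right[OF kd] d assms(3,4) by simp
  then have "P (b + 1)" by (simp add: m_def)
  moreover have "x = b + 1 \<or> x \<le> b" if "x \<le> b + 1" for x using that by linarith
  ultimately show ?thesis using sep unfolding separated_def by blast
qed

lemma separated_reaches_modulus:
  assumes "\<not> P 0" "P 1"
  shows "\<exists>a b. 5 \<le> a \<and> 6 \<le> b \<and> a + b = p \<and> separated a b"
proof -
  have "\<exists>a b. 5 \<le> a \<and> 6 \<le> b \<and> a + b = 11 + int n \<and> separated a b" if "11 + int n \<le> p" for n
    using that
  proof (induction n)
    case 0
    show ?case using separated_base[OF assms] by auto
  next
    case (Suc n)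
    then obtain a b where ab: "5 \<le> a" "6 \<le> b" "a + b = 11 + int n" "separated a b" by auto
    with Suc.prems have "a + b < p" by simp
    then have "separated (a + 1) b \<or> separated a (b + 1)"
      using separated_extend_left separated_extend_right ab by (cases "a < b") auto
    then show ?case
    proof
      assume "separated (a + 1) b"
      then show ?case using ab by (intro exI[of _ "a + 1"] exI[of _ b]) auto
    next
      assume "separated a (b + 1)"
      then show ?case using ab by (intro exI[of _ a] exI[of _ "b + 1"]) auto
    qed
  qed
  moreover have "11 + int (nat (p - 11)) = p" using modulus_large by simp
  ultimately show ?thesis by (metis order_refl)
qed

lemma not_separated_zero_one: "\<not> (\<not> P 0 \<and> P 1)"
proof
  assume "\<not> P 0 \<and> P 1"
  then obtain a b where "5 \<le> a" "6 \<le> b" "a + b = p" "separated a b"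
    using separated_reaches_modulus by blast
  moreover have "P (b - p + p) = P (b - p)" by (rule periodic)
  ultimately show False unfolding separated_def by auto
qed

lemma translate:
  "midpoint_closed_colouring p (\<lambda>y. P (x + y) = c)"
proof
  fix y show "(P (x + (y + p)) = c) = (P (x + y) = c)" using periodic[of "x + y"] by (simp add: add.assoc)
next
  fix k d m :: int
  assume "0 < k" "d = k^2 \<or> d = 6 * k^2" "2 * d + 3 < p" "(P (x + (m - d)) = c) = (P (x + (m + d)) = c)"
  moreover from this(4) have "P (x + m - d) = P (x + m + d)" by (auto simp: algebra_simps)
  ultimately show "(P (x + m) = c) = (P (x + (m + d)) = c)"
    using midpoint[of k d "x + m"] by (simp add: algebra_simps)
next
  fix y assume "(P (x + y) = c) = (P (x + (y + 3)) = c)"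
  then have "P (x + y) = P (x + y + 3)" by (auto simp: add.assoc)
  then show "(P (x + (y + 1)) = c) = (P (x + y) = c) \<and> (P (x + (y + 2)) = c) = (P (x + y) = c)"
    using three_step[of "x + y"] by (simp add: add.assoc)
qed (rule modulus_large)

lemma adjacent_eq: "P (x + 1) = P x"
proof -
  interpret shifted: midpoint_closed_colouring p "\<lambda>y. P (x + y) = P (x + 1)"
    by (rule translate)
  show ?thesis using shifted.not_separated_zero_one by auto
qed

lemma colour_constant: "P x = P 0"
proof (induction x rule: int_induct[where k = 0])
  case (step1 i)
  then show ?case using adjacent_eq[of i] by simp
next
  case (step2 i)
  then show ?case using adjacent_eq[of "i - 1"] by simp
qed simp

end

lemma paley_reduction_colouring:
  fixes p :: int
  assumes "prime p" "12 \<le> p" "\<not> QuadRes p 2" "\<not> QuadRes p 3"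
    and red: "is_reduction (Fp p) (paley_path p) A B"
  shows "midpoint_closed_colouring p (\<lambda>x. x mod p \<in> B)"
proof -
  have mod_in: "x mod p \<in> Fp p" for x using assms(2) by (simp add: Fp_def)
  note same_side = reduction_path_side[OF red mod_in mod_in]
  show ?thesis
  proof
    show "((x + p) mod p \<in> B) = (x mod p \<in> B)" for x by simp
  next
    fix k d m :: int
    assume k: "0 < k" "d = k^2 \<or> d = 6 * k^2" and d: "2 * d + 3 < p"
      and ends: "((m - d) mod p \<in> B) = ((m + d) mod p \<in> B)"
    have "0 < d" using k by auto
    have "\<not> QuadRes p (2 * d)" using not_QuadRes_double_step[OF assms(1,3,4) k] d by simp
    then have "m mod p \<in> set (paley_path p ((m - d) mod p) ((m + d) mod p))"
      using paley_path_midpoint[OF assms(1) _ \<open>0 < d\<close> d] by simp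
    moreover have "(m - d) mod p \<noteq> (m + d) mod p" using mod_neq_of_dist \<open>0 < d\<close> d by simp
    ultimately show "(m mod p \<in> B) = ((m + d) mod p \<in> B)" using same_side ends by blast
  next
    fix x :: int
    assume ends: "(x mod p \<in> B) = ((x + 3) mod p \<in> B)"
    have "x mod p \<noteq> (x + 3) mod p" using mod_neq_of_dist assms(2) by simp
    moreover have "(x + 1) mod p \<in> set (paley_path p (x mod p) ((x + 3) mod p))"
      "(x + 2) mod p \<in> set (paley_path p (x mod p) ((x + 3) mod p))"
      unfolding paley_path_three[OF assms(4)] by simp_all
    ultimately show "((x + 1) mod p \<in> B) = (x mod p \<in> B) \<and> ((x + 2) mod p \<in> B) = (x mod p \<in> B)"
      using same_side ends by blast
  next
    show "12 \<le> p" by (fact assms(2))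
  qed
qed

theorem proposition2p1:
  fixes p :: int
  assumes "prime p" and "p \<ge> 30"
    and "QuadRes p (-1)" and "\<not> QuadRes p 2" and "\<not> QuadRes p 3"
  shows "irreducible_path_system (Fp p) (paley_path p)"
  unfolding irreducible_path_system_def
proof
  assume "\<exists>A B. is_reduction (Fp p) (paley_path p) A B"
  then obtain A B where red: "is_reduction (Fp p) (paley_path p) A B" by blast
  interpret colouring: midpoint_closed_colouring p "\<lambda>x. x mod p \<in> B"
    using paley_reduction_colouring[OF assms(1) _ assms(4,5) red] assms(2) by simp
  obtain a b where "a \<in> A" "b \<in> B" using red unfolding is_reduction_def by blast
  moreover have "a \<in> {0..<p}" "b \<in> {0..<p}" "a \<notin> B"
    using red \<open>a \<in> A\<close> \<open>b \<in> B\<close> unfolding is_reduction_def Fp_def by auto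
  ultimately show False using colouring.colour_constant[of a] colouring.colour_constant[of b] by auto
qed

end
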